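(* Let $B = M \cup \{\omega_1,\ldots,\omega_p\}$ with $p\ge1$ and $\omega_i\in P_2\setminus M$, let $r(B)=\max\{d(\omega_1),\ldots,d(\omega_p)\}$ and $c(B)=\log_2(2r(B)+1)+1$. Then for every finite system $F$ of Boolean functions of variables $x_1,\ldots,x_n$, $$I_B(F)\ge \left\lceil \log_2(d(F)+1)\right\rceil - c(B).$$
   Context: $P_2$ denotes the set of all Boolean functions and $M\subset P_2$ the set of all monotone Boolean functions (including the constants). Tuples in $\{0,1\}^n$ are compared componentwise. An increasing chain is a sequence of pairwise distinct tuples $\tilde\alpha_1,\ldots,\tilde\alpha_r\in\{0,1\}^n$ with $\tilde\alpha_i\le\tilde\alpha_{i+1}$ for all $i$. For a Boolean function $f$, a pair $(\tilde\alpha,\tilde\beta)$ with $\tilde\alpha\le\tilde\beta$ and $f(\tilde\alpha)>f(\tilde\beta)$ is a jump of $f$; a pair is a jump of a system $F$ if it is a jump of some $f\in F$. For a chain $C=(\tilde\alpha_1,\ldots,\tilde\alpha_r)$, $d_C(F)$ is the number of $i$ with $(\tilde\alpha_i,\tilde\alpha_{i+1})$ a jump of $F$, and $d(F)=\max_C d_C(F)$ over all chains; $d(f)=d(\{f\})$. A circuit over $B$ is a Boolean circuit with inputs $x_1,\ldots,x_n$ whose gates compute functions of $B$; gates computing functions in $M$ have weight $0$ and gates computing some $\omega_i$ have weight $1$. $I_B(F)$ is the minimum total weight of a circuit over $B$ realizing all functions of $F$. *)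

theory Defs
  imports Complex_Main
begin

text \<open>Tuples of {0,1}^n are bool lists of length n (False = 0, True = 1).
  A Boolean function of k variables is a map bool list \<Rightarrow> bool, considered on
  lists of length k.\<close>

definition tuples :: "nat \<Rightarrow> bool list set" where
  "tuples n = {xs. length xs = n}"

definition tle :: "bool list \<Rightarrow> bool list \<Rightarrow> bool" where
  "tle xs ys \<longleftrightarrow> list_all2 (\<le>) xs ys"

definition monotone_fn :: "nat \<Rightarrow> (bool list \<Rightarrow> bool) \<Rightarrow> bool" where
  "monotone_fn k f \<longleftrightarrow>
     (\<forall>xs ys. length xs = k \<longrightarrow> length ys = k \<longrightarrow> tle xs ys \<longrightarrow> f xs \<le> f ys)"

definition is_chain :: "nat \<Rightarrow> bool list list \<Rightarrow> bool" where
  "is_chain n C \<longleftrightarrow> distinct C \<and> (\<forall>a\<in>set C. length a = n) \<and>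
     (\<forall>i. Suc i < length C \<longrightarrow> tle (C ! i) (C ! Suc i))"

definition is_jump :: "(bool list \<Rightarrow> bool) set \<Rightarrow> bool list \<Rightarrow> bool list \<Rightarrow> bool" where
  "is_jump F a b \<longleftrightarrow> tle a b \<and> (\<exists>f\<in>F. f a > f b)"

definition dC :: "(bool list \<Rightarrow> bool) set \<Rightarrow> bool list list \<Rightarrow> nat" where
  "dC F C = card {i. Suc i < length C \<and> is_jump F (C ! i) (C ! Suc i)}"

definition dF :: "nat \<Rightarrow> (bool list \<Rightarrow> bool) set \<Rightarrow> nat" where
  "dF n F = Max {dC F C | C. is_chain n C}"

text \<open>Circuits: nodes 0..n-1 are the inputs x_1..x_n; gate j (0-based) is node n+j.
  A gate is a pair (g, args): it computes g applied to the values of the nodes in args,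
  so g is a Boolean function of length args variables.\<close>
type_synonym gate = "(bool list \<Rightarrow> bool) \<times> nat list"

fun circ_vals :: "gate list \<Rightarrow> bool list \<Rightarrow> bool list" where
  "circ_vals [] v = v"
| "circ_vals ((g, as) # gs) v = circ_vals gs (v @ [g (map (\<lambda>i. v ! i) as)])"

definition wf_circuit :: "nat \<Rightarrow> gate list \<Rightarrow> bool" where
  "wf_circuit n gs \<longleftrightarrow> (\<forall>j < length gs. \<forall>i \<in> set (snd (gs ! j)). i < n + j)"

text \<open>Basis B = M \<union> {\<omega>_1,...,\<omega>_p}; each \<omega>_i is given as (arity, function).\<close>
definition gate_in_basis :: "(nat \<times> (bool list \<Rightarrow> bool)) list \<Rightarrow> gate \<Rightarrow> bool" where
  "gate_in_basis oms gt \<longleftrightarrow>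
     (let k = length (snd gt) in
       monotone_fn k (fst gt) \<or>
       (\<exists>(m, w) \<in> set oms. m = k \<and> (\<forall>xs. length xs = k \<longrightarrow> fst gt xs = w xs)))"

definition gate_weight :: "gate \<Rightarrow> nat" where
  "gate_weight gt = (if monotone_fn (length (snd gt)) (fst gt) then 0 else 1)"

definition circ_weight :: "gate list \<Rightarrow> nat" where
  "circ_weight gs = (\<Sum>gt\<leftarrow>gs. gate_weight gt)"

definition realizes :: "(nat \<times> (bool list \<Rightarrow> bool)) list \<Rightarrow> nat \<Rightarrow> gate list
                        \<Rightarrow> (bool list \<Rightarrow> bool) set \<Rightarrow> bool" where
  "realizes oms n gs F \<longleftrightarrow> wf_circuit n gs \<and> (\<forall>gt\<in>set gs. gate_in_basis oms gt) \<and>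
     (\<forall>f\<in>F. \<exists>j < n + length gs. \<forall>xs. length xs = n \<longrightarrow> circ_vals gs xs ! j = f xs)"

definition I_B :: "(nat \<times> (bool list \<Rightarrow> bool)) list \<Rightarrow> nat \<Rightarrow> (bool list \<Rightarrow> bool) set \<Rightarrow> nat" where
  "I_B oms n F = (LEAST w. \<exists>gs. realizes oms n gs F \<and> circ_weight gs = w)"

definition r_B :: "(nat \<times> (bool list \<Rightarrow> bool)) list \<Rightarrow> nat" where
  "r_B oms = Max ((\<lambda>(k, w). dF k {w}) ` set oms)"

definition c_B :: "(nat \<times> (bool list \<Rightarrow> bool)) list \<Rightarrow> real" where
  "c_B oms = log 2 (2 * real (r_B oms) + 1) + 1"

end

theory Submission
  imports Defs
begin

text \<open>A circuit of weight W over B contains exactly W non-monotone gates. If between two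
  comparable tuples of a chain none of them changes its value, the whole circuit behaves
  monotonically there, so this step is not a jump of F. Counting by induction over the
  non-monotone gates: once the values of the m earlier non-monotone gates are fixed (one of
  2^m patterns), the inputs of the next one, an \<omega>_i, grow monotonically along the chain, so
  its value changes at most 2 d(\<omega>_i) + 1 \<le> 2 r(B) + 1 times. Hence
  d(F) \<le> (2^W - 1)(2 r(B) + 1), which is the bound after taking logarithms. A realizing
  circuit exists because any \<omega>_i yields the negations of the inputs, and every f is a
  monotone function of the literals.\<close>

lemma tle_refl: "tle xs xs"
  unfolding tle_def by (simp add: list_all2_refl)

lemma tle_trans: "tle xs ys \<Longrightarrow> tle ys zs \<Longrightarrow> tle xs zs"
  unfolding tle_def by (rule list_all2_trans) auto

lemma tle_antisym: "tle xs ys \<Longrightarrow> tle ys xs \<Longrightarrow> xs = ys"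
  unfolding tle_def by (rule list_all2_antisym) auto

lemma tle_nthD: "tle xs ys \<Longrightarrow> i < length xs \<Longrightarrow> xs ! i \<le> ys ! i"
  unfolding tle_def by (rule list_all2_nthD)

lemma tle_map: "(\<And>a. a \<in> set as \<Longrightarrow> f a \<le> g a) \<Longrightarrow> tle (map f as) (map g as)"
  unfolding tle_def by (induction as) auto

lemma tle_lift_Suc:
  assumes "\<And>a. Suc a < N \<Longrightarrow> tle (v a) (v (Suc a))" "a \<le> b" "b < N"
  shows "tle (v a) (v b)"
  using assms(2,3)
proof (induction b)
  case 0
  then show ?case by (simp add: tle_refl)
next
  case (Suc b)
  then show ?case
    by (cases "a = Suc b") (auto intro: tle_refl tle_trans assms(1))
qed

lemma circ_vals_input: "i < length v \<Longrightarrow> circ_vals gs v ! i = v ! i"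
  by (induction gs arbitrary: v) (auto simp: nth_append)

lemma circ_vals_append: "circ_vals (gs @ hs) v = circ_vals hs (circ_vals gs v)"
  by (induction gs arbitrary: v) auto

lemma circ_vals_layer:
  "(\<And>g as. (g, as) \<in> set hs \<Longrightarrow> \<forall>i\<in>set as. i < length v) \<Longrightarrow>
   circ_vals hs v = v @ map (\<lambda>(g, as). g (map ((!) v) as)) hs"
proof (induction hs arbitrary: v)
  case (Cons gt hs)
  obtain g as where gt: "gt = (g, as)" by force
  let ?v = "v @ [g (map ((!) v) as)]"
  have same_args: "map ((!) ?v) bs = map ((!) v) bs" if "(h, bs) \<in> set hs" for h bs
    using Cons.prems[of h bs] that by (auto simp: nth_append)
  have "circ_vals hs ?v = ?v @ map (\<lambda>(g, as). g (map ((!) ?v) as)) hs"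
    using Cons.prems by (intro Cons.IH) force
  also have "map (\<lambda>(g, as). g (map ((!) ?v) as)) hs = map (\<lambda>(g, as). g (map ((!) v) as)) hs"
    by (rule map_cong[OF refl]) (auto simp: same_args split: prod.splits)
  finally show ?case using gt by simp
qed simp

lemma circ_vals_gate:
  assumes "j < length gs" "\<forall>i\<in>set (snd (gs ! j)). i < length v + j"
  shows "circ_vals gs v ! (length v + j) = fst (gs ! j) (map ((!) (circ_vals gs v)) (snd (gs ! j)))"
  using assms
proof (induction gs arbitrary: v j)
  case (Cons gt gs)
  obtain g as where gt: "gt = (g, as)" by force
  show ?case
  proof (cases j)
    case 0
    have args: "map ((!) v) as = map ((!) (circ_vals gs (v @ [g (map ((!) v) as)]))) as"
      using Cons.prems gt 0 by (intro map_cong) (auto simp: circ_vals_input nth_append)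
    show ?thesis using gt 0 by (simp add: circ_vals_input args[symmetric])
  next
    case (Suc j')
    then show ?thesis
      using Cons.prems gt Cons.IH[of j' "v @ [g (map ((!) v) as)]"] by auto
  qed
qed simp

lemma finite_dC_values: "finite {dC F C | C. is_chain n C}"
proof -
  have "dC F C \<le> card {xs :: bool list. length xs = n}" if "is_chain n C" for C
  proof -
    have "dC F C \<le> card {..<length C}"
      unfolding dC_def by (rule card_mono) auto
    also have "card {..<length C} = card (set C)"
      using that unfolding is_chain_def by (simp add: distinct_card)
    also have "\<dots> \<le> card {xs :: bool list. length xs = n}"
      using that unfolding is_chain_def by (intro card_mono finite_list_length) auto
    finally show ?thesis .
  qed
  then have "{dC F C | C. is_chain n C} \<subseteq> {..card {xs :: bool list. length xs = n}}"
    by auto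
  then show ?thesis by (rule finite_subset) simp
qed

lemma dC_le_dF: "is_chain n C \<Longrightarrow> dC F C \<le> dF n F"
  unfolding dF_def by (rule Max_ge[OF finite_dC_values]) blast

lemma dF_ge_alternating:
  fixes v :: "nat \<Rightarrow> bool list"
  assumes len: "\<And>a. a < 2 * s \<Longrightarrow> length (v a) = k"
    and step: "\<And>a. Suc a < 2 * s \<Longrightarrow> tle (v a) (v (Suc a))"
    and alt: "\<And>a. a < 2 * s \<Longrightarrow> w (v a) \<longleftrightarrow> even a"
  shows "s \<le> dF k {w}"
proof -
  define C where "C = map v [0..<2 * s]"
  have "inj_on v {..<2 * s}"
  proof (rule inj_onI, rule ccontr)
    have no_repeat: False if "a < b" "b < 2 * s" "v a = v b" for a b
    proof -
      have "tle (v a) (v (Suc a))"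
        using that by (intro step) simp
      moreover have "tle (v (Suc a)) (v b)"
        by (rule tle_lift_Suc[of "2 * s" v]) (use that step in auto)
      ultimately have "v (Suc a) = v a" using \<open>v a = v b\<close> tle_antisym by metis
      then show False using alt[of a] alt[of "Suc a"] that by auto
    qed
    fix a b assume "a \<in> {..<2 * s}" "b \<in> {..<2 * s}" "v a = v b" "a \<noteq> b"
    then show False using no_repeat[of a b] no_repeat[of b a] by (auto simp: neq_iff)
  qed
  then have chain: "is_chain k C"
    unfolding is_chain_def C_def using len step by (simp add: distinct_map atLeast0LessThan)
  have "(*) 2 ` {..<s} \<subseteq> {i. Suc i < length C \<and> is_jump {w} (C ! i) (C ! Suc i)}"
  proof clarify
    fix t assume "t < s"
    then show "Suc (2 * t) < length C \<and> is_jump {w} (C ! (2 * t)) (C ! Suc (2 * t))"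
      unfolding C_def is_jump_def using step[of "2 * t"] alt[of "2 * t"] alt[of "Suc (2 * t)"] by simp
  qed
  then have "card ((*) 2 ` {..<s}) \<le> dC {w} C"
    unfolding dC_def by (rule card_mono[rotated]) (rule finite_subset[of _ "{..<length C}"], auto)
  moreover have "card ((*) 2 ` {..<s}) = s"
    by (simp add: card_image inj_on_def)
  ultimately show ?thesis using dC_le_dF[OF chain, of "{w}"] by linarith
qed

lemma finite_set_strict_enumeration:
  fixes P :: "nat set"
  assumes "finite P"
  obtains p where "\<And>t. t < card P \<Longrightarrow> p t \<in> P" "\<And>t. Suc t < card P \<Longrightarrow> p t < p (Suc t)"
proof
  let ?xs = "sorted_list_of_set P"
  show "?xs ! t \<in> P" if "t < card P" for t
    using that assms by (metis length_sorted_list_of_set nth_mem set_sorted_list_of_set)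
  show "?xs ! t < ?xs ! Suc t" if "Suc t < card P" for t
    using that strict_sorted_list_of_set[of P] by (simp add: sorted_wrt_nth_less)
qed

lemma dF_ge_alternating_on:
  fixes u :: "nat \<Rightarrow> bool list" and q :: "nat \<Rightarrow> nat"
  assumes len: "\<And>i. i \<in> Q \<Longrightarrow> length (u i) = k"
    and mono: "\<And>i i'. i \<in> Q \<Longrightarrow> i' \<in> Q \<Longrightarrow> i \<le> i' \<Longrightarrow> tle (u i) (u i')"
    and q_in: "\<And>a. a < 2 * s \<Longrightarrow> q a \<in> Q"
    and q_step: "\<And>a. Suc a < 2 * s \<Longrightarrow> q a \<le> q (Suc a)"
    and alt: "\<And>a. a < 2 * s \<Longrightarrow> w (u (q a)) \<longleftrightarrow> even a"
  shows "s \<le> dF k {w}"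
proof (rule dF_ge_alternating[where v = "u \<circ> q"])
  fix a assume "Suc a < 2 * s"
  then show "tle ((u \<circ> q) a) ((u \<circ> q) (Suc a))"
    using mono[OF q_in q_in q_step] by simp
qed (use len q_in alt in auto)

lemma card_falls_le_dF:
  fixes u :: "nat \<Rightarrow> bool list"
  assumes len: "\<And>i. i \<in> Q \<Longrightarrow> length (u i) = k"
    and mono: "\<And>i i'. i \<in> Q \<Longrightarrow> i' \<in> Q \<Longrightarrow> i \<le> i' \<Longrightarrow> tle (u i) (u i')"
  shows "card {i. i \<in> Q \<and> Suc i \<in> Q \<and> w (u i) \<and> \<not> w (u (Suc i))} \<le> dF k {w}"
    (is "card ?P \<le> _")
proof (cases "finite ?P")
  case True
  obtain p where p_in: "\<And>t. t < card ?P \<Longrightarrow> p t \<in> ?P"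
    and p_less: "\<And>t. Suc t < card ?P \<Longrightarrow> p t < p (Suc t)"
    using finite_set_strict_enumeration[OF True] by blast
  \<comment> \<open>the falls p 0 < p 1 < ... give the alternating sequence p 0, p 0 + 1, p 1, p 1 + 1, ...\<close>
  define q where "q a = (if even a then p (a div 2) else Suc (p (a div 2)))" for a
  show ?thesis
  proof (rule dF_ge_alternating_on[OF len mono, where q = q])
    fix a assume "a < 2 * card ?P"
    then have "p (a div 2) \<in> ?P" by (intro p_in) simp
    then show "q a \<in> Q" "w (u (q a)) \<longleftrightarrow> even a"
      unfolding q_def by auto
  next
    fix a assume a: "Suc a < 2 * card ?P"
    show "q a \<le> q (Suc a)"
    proof (cases "even a")
      case False
      then have "p (a div 2) < p (Suc (a div 2))"
        using a by (intro p_less) (auto elim: oddE)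
      then show ?thesis using False unfolding q_def by auto
    qed (simp add: q_def)
  qed
qed simp

lemma card_rises_le_dF:
  fixes u :: "nat \<Rightarrow> bool list"
  assumes len: "\<And>i. i \<in> Q \<Longrightarrow> length (u i) = k"
    and mono: "\<And>i i'. i \<in> Q \<Longrightarrow> i' \<in> Q \<Longrightarrow> i \<le> i' \<Longrightarrow> tle (u i) (u i')"
  shows "card {i. i \<in> Q \<and> Suc i \<in> Q \<and> \<not> w (u i) \<and> w (u (Suc i))} \<le> dF k {w} + 1"
    (is "card ?P \<le> _")
proof (cases "finite ?P")
  case True
  obtain p where p_in: "\<And>t. t < card ?P \<Longrightarrow> p t \<in> ?P"
    and p_less: "\<And>t. Suc t < card ?P \<Longrightarrow> p t < p (Suc t)"
    using finite_set_strict_enumeration[OF True] by blast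
  \<comment> \<open>the rises give p 0 + 1, p 1, p 1 + 1, p 2, ..., which loses one of them\<close>
  define q where "q a = (if even a then Suc (p (a div 2)) else p (Suc (a div 2)))" for a
  have "card ?P - 1 \<le> dF k {w}"
  proof (rule dF_ge_alternating_on[OF len mono, where q = q])
    fix a assume "a < 2 * (card ?P - 1)"
    then have "Suc (a div 2) < card ?P" by linarith
    then have "p (a div 2) \<in> ?P" "p (Suc (a div 2)) \<in> ?P"
      using p_in[of "a div 2"] p_in[of "Suc (a div 2)"] by simp_all
    then show "q a \<in> Q" "w (u (q a)) \<longleftrightarrow> even a"
      unfolding q_def by auto
  next
    fix a assume a: "Suc a < 2 * (card ?P - 1)"
    show "q a \<le> q (Suc a)"
    proof (cases "even a")
      case True
      then have "p (a div 2) < p (Suc (a div 2))"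
        using a by (intro p_less) auto
      then show ?thesis using True unfolding q_def by auto
    qed (simp add: q_def)
  qed
  then show ?thesis by linarith
qed simp

lemma card_changes_le_dF:
  fixes u :: "nat \<Rightarrow> bool list"
  assumes len: "\<And>i. i \<in> Q \<Longrightarrow> length (u i) = k"
    and mono: "\<And>i i'. i \<in> Q \<Longrightarrow> i' \<in> Q \<Longrightarrow> i \<le> i' \<Longrightarrow> tle (u i) (u i')"
  shows "card {i. i \<in> Q \<and> Suc i \<in> Q \<and> w (u i) \<noteq> w (u (Suc i))} \<le> 2 * dF k {w} + 1"
proof -
  let ?falls = "{i. i \<in> Q \<and> Suc i \<in> Q \<and> w (u i) \<and> \<not> w (u (Suc i))}"
  let ?rises = "{i. i \<in> Q \<and> Suc i \<in> Q \<and> \<not> w (u i) \<and> w (u (Suc i))}"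
  have "{i. i \<in> Q \<and> Suc i \<in> Q \<and> w (u i) \<noteq> w (u (Suc i))} = ?falls \<union> ?rises"
    by auto
  then have "card {i. i \<in> Q \<and> Suc i \<in> Q \<and> w (u i) \<noteq> w (u (Suc i))} \<le> card ?falls + card ?rises"
    by (simp add: card_Un_le)
  also have "\<dots> \<le> 2 * dF k {w} + 1"
    using card_falls_le_dF[where Q = Q and u = u and k = k and w = w, OF len mono]
      card_rises_le_dF[where Q = Q and u = u and k = k and w = w, OF len mono] by linarith
  finally show ?thesis .
qed

definition nonmono_below :: "gate list \<Rightarrow> nat \<Rightarrow> nat set" where
  "nonmono_below gs b = {j. j < b \<and> gate_weight (gs ! j) = 1}"

lemma circ_weight_eq_card_nonmono: "circ_weight gs = card (nonmono_below gs (length gs))"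
proof -
  have "circ_weight gs = (\<Sum>j<length gs. gate_weight (gs ! j))"
    unfolding circ_weight_def by (simp add: sum_list_sum_nth atLeast0LessThan)
  also have "\<dots> = (\<Sum>j<length gs. if gate_weight (gs ! j) = 1 then 1 else 0)"
    by (rule sum.cong) (auto simp: gate_weight_def)
  also have "\<dots> = card (nonmono_below gs (length gs))"
    by (simp add: sum.If_cases nonmono_below_def lessThan_def Collect_conj_eq)
  finally show ?thesis .
qed

lemma circ_vals_mono_if_nonmono_agree:
  assumes wf: "wf_circuit n gs" and len: "length x = n" "length y = n" and "tle x y"
    and "q < n + length gs"
    and "\<forall>j\<in>nonmono_below gs (length gs). n + j \<le> q \<longrightarrow>
           circ_vals gs x ! (n + j) = circ_vals gs y ! (n + j)"
  shows "circ_vals gs x ! q \<le> circ_vals gs y ! q"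
  using assms(5,6)
proof (induction q rule: less_induct)
  case (less q)
  show ?case
  proof (cases "q < n")
    case True
    then show ?thesis using tle_nthD[OF \<open>tle x y\<close>, of q] len by (simp add: circ_vals_input)
  next
    case False
    then obtain j where q: "q = n + j" by (metis le_iff_add not_less)
    then have j: "j < length gs" using less.prems by simp
    obtain g as where gj: "gs ! j = (g, as)" by force
    have args: "\<forall>i\<in>set as. i < n + j"
      using wf j gj unfolding wf_circuit_def by (metis snd_conv)
    have vals: "circ_vals gs z ! q = g (map ((!) (circ_vals gs z)) as)" if "length z = n" for z
      using circ_vals_gate[of j gs z] j args gj that q by simp
    show ?thesis
    proof (cases "gate_weight (gs ! j) = 1")
      case True
      then have "j \<in> nonmono_below gs (length gs)"
        using j by (simp add: nonmono_below_def)
      then show ?thesis using less.prems q by simp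
    next
      case False
      then have "monotone_fn (length as) g"
        using gj unfolding gate_weight_def by (simp split: if_splits)
      moreover have "tle (map ((!) (circ_vals gs x)) as) (map ((!) (circ_vals gs y)) as)"
        using args q less by (intro tle_map) auto
      ultimately have "g (map ((!) (circ_vals gs x)) as) \<le> g (map ((!) (circ_vals gs y)) as)"
        unfolding monotone_fn_def by (metis length_map)
      then show ?thesis using vals len by simp
    qed
  qed
qed

lemma is_chain_tle: "is_chain n C \<Longrightarrow> i \<le> i' \<Longrightarrow> i' < length C \<Longrightarrow> tle (C ! i) (C ! i')"
  unfolding is_chain_def by (rule tle_lift_Suc[of "length C"]) auto

lemma r_B_ge: "(k, w) \<in> set oms \<Longrightarrow> dF k {w} \<le> r_B oms"
  unfolding r_B_def by (rule Max_ge) force+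

definition nonmono_pattern :: "nat \<Rightarrow> gate list \<Rightarrow> nat \<Rightarrow> bool list \<Rightarrow> nat set" where
  "nonmono_pattern n gs b x = {j \<in> nonmono_below gs b. circ_vals gs x ! (n + j)}"

lemma gate_inputs_mono_on_pattern:
  assumes wf: "wf_circuit n gs" and chain: "is_chain n C" and b: "b < length gs"
    and "i \<le> i'" "i' < length C"
    and pattern: "nonmono_pattern n gs b (C ! i) = nonmono_pattern n gs b (C ! i')"
  shows "tle (map ((!) (circ_vals gs (C ! i))) (snd (gs ! b)))
             (map ((!) (circ_vals gs (C ! i'))) (snd (gs ! b)))"
proof (rule tle_map)
  fix a assume "a \<in> set (snd (gs ! b))"
  then have "a < n + b"
    using wf b unfolding wf_circuit_def by blast
  moreover have "circ_vals gs (C ! i) ! (n + j) = circ_vals gs (C ! i') ! (n + j)"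
    if "j \<in> nonmono_below gs b" for j
    using pattern that unfolding nonmono_pattern_def by blast
  ultimately have "\<forall>j\<in>nonmono_below gs (length gs). n + j \<le> a \<longrightarrow>
                     circ_vals gs (C ! i) ! (n + j) = circ_vals gs (C ! i') ! (n + j)"
    by (auto simp: nonmono_below_def)
  moreover have "length (C ! i) = n" "length (C ! i') = n"
    using chain \<open>i \<le> i'\<close> \<open>i' < length C\<close> unfolding is_chain_def by auto
  moreover have "tle (C ! i) (C ! i')"
    using is_chain_tle[OF chain \<open>i \<le> i'\<close> \<open>i' < length C\<close>] .
  ultimately show "circ_vals gs (C ! i) ! a \<le> circ_vals gs (C ! i') ! a"
    using \<open>a < n + b\<close> b by (intro circ_vals_mono_if_nonmono_agree[OF wf]) auto
qed

lemma card_gate_switches_with_pattern_le: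
  assumes wf: "wf_circuit n gs" and basis: "\<forall>gt\<in>set gs. gate_in_basis oms gt"
    and chain: "is_chain n C" and b: "b < length gs" "gate_weight (gs ! b) = 1"
  shows "card {i. Suc i < length C \<and> nonmono_pattern n gs b (C ! i) = p \<and>
           nonmono_pattern n gs b (C ! Suc i) = p \<and>
           circ_vals gs (C ! i) ! (n + b) \<noteq> circ_vals gs (C ! Suc i) ! (n + b)}
         \<le> 2 * r_B oms + 1"
proof -
  obtain g as where gb: "gs ! b = (g, as)" by force
  have "gate_in_basis oms (gs ! b)"
    using basis nth_mem[OF b(1)] by blast
  moreover have "\<not> monotone_fn (length as) g"
    using b(2) gb unfolding gate_weight_def by (auto split: if_splits)
  ultimately obtain k w where kw: "(k, w) \<in> set oms" "k = length as"
    and gw: "\<And>xs. length xs = length as \<Longrightarrow> g xs = w xs"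
    using gb unfolding gate_in_basis_def Let_def by auto
  have args: "\<forall>i\<in>set as. i < n + b"
    using wf b gb unfolding wf_circuit_def by (metis snd_conv)
  define Q where "Q = {i. i < length C \<and> nonmono_pattern n gs b (C ! i) = p}"
  define u where "u i = map ((!) (circ_vals gs (C ! i))) as" for i
  have gate_val: "circ_vals gs (C ! i) ! (n + b) = w (u i)" if "i < length C" for i
    using circ_vals_gate[of b gs "C ! i"] b args gb gw chain that
    unfolding u_def is_chain_def by simp
  have mono: "tle (u i) (u i')" if "i \<in> Q" "i' \<in> Q" "i \<le> i'" for i i'
    using gate_inputs_mono_on_pattern[OF wf chain b(1) \<open>i \<le> i'\<close>] that gb
    unfolding Q_def u_def by simp
  have len: "length (u i) = k" if "i \<in> Q" for i
    using kw unfolding u_def by simp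
  have "card {i. Suc i < length C \<and> nonmono_pattern n gs b (C ! i) = p \<and>
           nonmono_pattern n gs b (C ! Suc i) = p \<and>
           circ_vals gs (C ! i) ! (n + b) \<noteq> circ_vals gs (C ! Suc i) ! (n + b)}
        \<le> card {i. i \<in> Q \<and> Suc i \<in> Q \<and> w (u i) \<noteq> w (u (Suc i))}"
    by (rule card_mono) (auto simp: Q_def gate_val)
  also have "\<dots> \<le> 2 * dF k {w} + 1"
    by (rule card_changes_le_dF[OF len mono])
  also have "\<dots> \<le> 2 * r_B oms + 1"
    using r_B_ge[OF kw(1)] by simp
  finally show ?thesis .
qed

definition switch_steps :: "nat \<Rightarrow> gate list \<Rightarrow> bool list list \<Rightarrow> nat set \<Rightarrow> nat set" where
  "switch_steps n gs C J = {i. Suc i < length C \<and>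
     (\<exists>j\<in>J. circ_vals gs (C ! i) ! (n + j) \<noteq> circ_vals gs (C ! Suc i) ! (n + j))}"

lemma finite_switch_steps: "finite (switch_steps n gs C J)"
  unfolding switch_steps_def by (rule finite_subset[of _ "{..<length C}"]) auto

text \<open>If no earlier non-monotone gate switches at a step but gate b does, then the step lies in
  a class of constant pattern, on which gate b switches at most 2 r(B) + 1 times.\<close>
lemma card_switch_steps_insert_le:
  assumes wf: "wf_circuit n gs" and basis: "\<forall>gt\<in>set gs. gate_in_basis oms gt"
    and chain: "is_chain n C" and b: "b < length gs" "gate_weight (gs ! b) = 1"
  shows "card (switch_steps n gs C (insert b (nonmono_below gs b)))
         \<le> card (switch_steps n gs C (nonmono_below gs b))
           + 2 ^ card (nonmono_below gs b) * (2 * r_B oms + 1)"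
proof -
  let ?J = "nonmono_below gs b"
  define PP where "PP p = {i. Suc i < length C \<and> nonmono_pattern n gs b (C ! i) = p \<and>
         nonmono_pattern n gs b (C ! Suc i) = p \<and>
         circ_vals gs (C ! i) ! (n + b) \<noteq> circ_vals gs (C ! Suc i) ! (n + b)}" for p
  have finite_J: "finite ?J"
    by (simp add: nonmono_below_def)
  have finite_PP: "finite (PP p)" for p
    unfolding PP_def by (rule finite_subset[of _ "{..<length C}"]) auto
  have "switch_steps n gs C (insert b ?J) \<subseteq> switch_steps n gs C ?J \<union> (\<Union>p\<in>Pow ?J. PP p)"
  proof
    fix i assume i: "i \<in> switch_steps n gs C (insert b ?J)"
    show "i \<in> switch_steps n gs C ?J \<union> (\<Union>p\<in>Pow ?J. PP p)"
    proof (cases "i \<in> switch_steps n gs C ?J")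
      case False
      then have "i \<in> PP (nonmono_pattern n gs b (C ! i))"
        using i unfolding PP_def switch_steps_def nonmono_pattern_def by auto
      moreover have "nonmono_pattern n gs b (C ! i) \<in> Pow ?J"
        unfolding nonmono_pattern_def by auto
      ultimately show ?thesis by blast
    qed simp
  qed
  then have "card (switch_steps n gs C (insert b ?J))
             \<le> card (switch_steps n gs C ?J \<union> (\<Union>p\<in>Pow ?J. PP p))"
    by (rule card_mono[rotated]) (simp add: finite_switch_steps finite_PP finite_J)
  also have "\<dots> \<le> card (switch_steps n gs C ?J) + card (\<Union>p\<in>Pow ?J. PP p)"
    by (rule card_Un_le)
  also have "card (\<Union>p\<in>Pow ?J. PP p) \<le> (\<Sum>p\<in>Pow ?J. card (PP p))"
    by (rule card_UN_le) (simp add: finite_J)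
  also have "\<dots> \<le> (\<Sum>p\<in>Pow ?J. 2 * r_B oms + 1)"
    unfolding PP_def by (intro sum_mono card_gate_switches_with_pattern_le[OF wf basis chain b])
  also have "\<dots> = 2 ^ card ?J * (2 * r_B oms + 1)"
    using finite_J by (simp add: card_Pow)
  finally show ?thesis by simp
qed

lemma card_switch_steps_le:
  assumes wf: "wf_circuit n gs" and basis: "\<forall>gt\<in>set gs. gate_in_basis oms gt"
    and chain: "is_chain n C"
  shows "b \<le> length gs \<Longrightarrow> card (switch_steps n gs C (nonmono_below gs b))
           \<le> (2 ^ card (nonmono_below gs b) - 1) * (2 * r_B oms + 1)"
proof (induction b)
  case 0
  then show ?case by (simp add: nonmono_below_def switch_steps_def)
next
  case (Suc b)
  let ?J = "nonmono_below gs b" and ?R = "2 * r_B oms + 1"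
  have IH: "card (switch_steps n gs C ?J) \<le> (2 ^ card ?J - 1) * ?R"
    using Suc by simp
  show ?case
  proof (cases "gate_weight (gs ! b) = 1")
    case False
    then have "nonmono_below gs (Suc b) = ?J"
      by (auto simp: nonmono_below_def less_Suc_eq)
    then show ?thesis using IH by simp
  next
    case True
    have J_Suc: "nonmono_below gs (Suc b) = insert b ?J"
      using True by (auto simp: nonmono_below_def less_Suc_eq)
    have card_J_Suc: "card (insert b ?J) = Suc (card ?J)"
      by (simp add: nonmono_below_def)
    obtain t where t: "2 ^ card ?J = Suc t"
      using not0_implies_Suc by (metis power_not_zero zero_neq_numeral)
    have "card (switch_steps n gs C (insert b ?J)) \<le> (2 ^ card ?J - 1) * ?R + 2 ^ card ?J * ?R"
      using card_switch_steps_insert_le[OF wf basis chain _ True] Suc.prems IH by force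
    also have "\<dots> = (2 ^ card (insert b ?J) - 1) * ?R"
      unfolding card_J_Suc using t by (simp add: algebra_simps)
    finally show ?thesis unfolding J_Suc .
  qed
qed

lemma jump_steps_subset_switch_steps:
  assumes "realizes oms n gs F" and chain: "is_chain n C"
  shows "{i. Suc i < length C \<and> is_jump F (C ! i) (C ! Suc i)}
         \<subseteq> switch_steps n gs C (nonmono_below gs (length gs))"
proof clarify
  fix i assume i: "Suc i < length C" and "is_jump F (C ! i) (C ! Suc i)"
  then obtain f where "f \<in> F" and f: "f (C ! i) > f (C ! Suc i)"
    and le: "tle (C ! i) (C ! Suc i)"
    unfolding is_jump_def by blast
  then obtain q where q: "q < n + length gs"
    and q_f: "\<And>xs. length xs = n \<Longrightarrow> circ_vals gs xs ! q = f xs"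
    using assms(1) unfolding realizes_def by blast
  have wf: "wf_circuit n gs"
    using assms(1) unfolding realizes_def by blast
  have len: "length (C ! i) = n" "length (C ! Suc i) = n"
    using chain i unfolding is_chain_def by auto
  show "i \<in> switch_steps n gs C (nonmono_below gs (length gs))"
  proof (rule ccontr)
    assume "i \<notin> switch_steps n gs C (nonmono_below gs (length gs))"
    then have "\<forall>j\<in>nonmono_below gs (length gs). n + j \<le> q \<longrightarrow>
                 circ_vals gs (C ! i) ! (n + j) = circ_vals gs (C ! Suc i) ! (n + j)"
      using i unfolding switch_steps_def by auto
    then have "circ_vals gs (C ! i) ! q \<le> circ_vals gs (C ! Suc i) ! q"
      by (rule circ_vals_mono_if_nonmono_agree[OF wf len le q])
    then show False using f q_f len by simp
  qed
qed

lemma dF_le_of_realizes: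
  assumes "realizes oms n gs F"
  shows "dF n F \<le> (2 ^ circ_weight gs - 1) * (2 * r_B oms + 1)"
proof -
  have wf: "wf_circuit n gs" and basis: "\<forall>gt\<in>set gs. gate_in_basis oms gt"
    using assms unfolding realizes_def by auto
  have "dC F C \<le> (2 ^ circ_weight gs - 1) * (2 * r_B oms + 1)" if chain: "is_chain n C" for C
  proof -
    have "dC F C \<le> card (switch_steps n gs C (nonmono_below gs (length gs)))"
      unfolding dC_def using jump_steps_subset_switch_steps[OF assms chain]
      by (rule card_mono[rotated]) (rule finite_switch_steps)
    also have "\<dots> \<le> (2 ^ circ_weight gs - 1) * (2 * r_B oms + 1)"
      using card_switch_steps_le[OF wf basis chain] by (simp add: circ_weight_eq_card_nonmono)
    finally show ?thesis .
  qed
  moreover have "is_chain n []"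
    unfolding is_chain_def by simp
  ultimately show ?thesis
    unfolding dF_def using finite_dC_values[where n = n and F = F] by (subst Max_le_iff) auto
qed

lemma wf_circuit_append:
  assumes "wf_circuit n gs" "\<And>g as. (g, as) \<in> set hs \<Longrightarrow> \<forall>i\<in>set as. i < n + length gs"
  shows "wf_circuit n (gs @ hs)"
  unfolding wf_circuit_def
proof (intro allI impI ballI)
  fix j i assume j: "j < length (gs @ hs)" and i: "i \<in> set (snd ((gs @ hs) ! j))"
  show "i < n + j"
  proof (cases "j < length gs")
    case True
    then show ?thesis using assms(1) i unfolding wf_circuit_def by (simp add: nth_append)
  next
    case False
    then have "(gs @ hs) ! j \<in> set hs" using j by (simp add: nth_append)
    then show ?thesis using assms(2)[of "fst ((gs @ hs) ! j)" "snd ((gs @ hs) ! j)"] i False by auto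
  qed
qed

lemma nonmonotone_fn_negates:
  assumes "\<not> monotone_fn k w"
  obtains xs D where "length xs = k" "\<And>b. w (map (\<lambda>j. if j \<in> D then b else xs ! j) [0..<k]) = (\<not> b)"
proof -
  obtain xs ys where xy: "length xs = k" "length ys = k" "tle xs ys" "w xs" "\<not> w ys"
    using assms unfolding monotone_fn_def by (auto simp: le_bool_def)
  define D where "D = {j. xs ! j \<noteq> ys ! j}"
  have "map (\<lambda>j. if j \<in> D then False else xs ! j) [0..<k] = xs"
       "map (\<lambda>j. if j \<in> D then True else xs ! j) [0..<k] = ys"
    using xy tle_nthD[OF xy(3)] by (auto simp: D_def le_bool_def intro!: nth_equalityI)
  then have "w (map (\<lambda>j. if j \<in> D then b else xs ! j) [0..<k]) = (\<not> b)" for b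
    using xy by (cases b) (simp_all only:, simp_all)
  then show ?thesis using that xy(1) by blast
qed

text \<open>Applied to the literals x @ map Not x, this is the disjunctive normal form of f;
  as a function of the 2n literals it is monotone.\<close>
definition literal_dnf :: "nat \<Rightarrow> (bool list \<Rightarrow> bool) \<Rightarrow> bool list \<Rightarrow> bool" where
  "literal_dnf n f v \<longleftrightarrow> (\<exists>y. length y = n \<and> f y \<and> (\<forall>i<n. if y ! i then v ! i else v ! (n + i)))"

lemma monotone_literal_dnf: "monotone_fn (2 * n) (literal_dnf n f)"
  unfolding monotone_fn_def
proof (intro allI impI le_boolI)
  fix v v' :: "bool list"
  assume len: "length v = 2 * n" and "tle v v'" and "literal_dnf n f v"
  then obtain y where y: "length y = n" "f y" "\<forall>i<n. if y ! i then v ! i else v ! (n + i)"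
    unfolding literal_dnf_def by blast
  have "v ! i \<Longrightarrow> v' ! i" if "i < 2 * n" for i
    using tle_nthD[OF \<open>tle v v'\<close>, of i] len that by (simp add: le_bool_def)
  then have "\<forall>i<n. if y ! i then v' ! i else v' ! (n + i)"
    using y(3) by (metis add_less_cancel_left mult_2 trans_less_add1)
  then show "literal_dnf n f v'"
    unfolding literal_dnf_def using y by blast
qed

lemma literal_dnf_literals:
  assumes "length x = n"
  shows "literal_dnf n f (x @ map Not x) = f x"
proof -
  have "(\<forall>i<n. if y ! i then (x @ map Not x) ! i else (x @ map Not x) ! (n + i)) \<longleftrightarrow> y = x"
    if "length y = n" for y
  proof
    assume literals: "\<forall>i<n. if y ! i then (x @ map Not x) ! i else (x @ map Not x) ! (n + i)"
    show "y = x"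
    proof (rule nth_equalityI)
      fix i assume "i < length y"
      then show "y ! i = x ! i"
        using literals assms that by (cases "y ! i") (auto simp: nth_append)
    qed (use assms that in simp)
  qed (use assms in \<open>auto simp: nth_append\<close>)
  then show ?thesis
    unfolding literal_dnf_def using assms by blast
qed

definition literal_args :: "nat \<Rightarrow> nat list" where
  "literal_args n = [0..<n] @ map ((+) (n + 2)) [0..<n]"

lemma length_literal_args: "length (literal_args n) = 2 * n"
  by (simp add: literal_args_def)

lemma set_literal_args: "a \<in> set (literal_args n) \<Longrightarrow> a < 2 * n + 2"
  by (auto simp: literal_args_def)

lemma map_nth_literal_args:
  "length x = n \<Longrightarrow> map ((!) (x @ [False, True] @ map Not x)) (literal_args n) = x @ map Not x"
  by (rule nth_equalityI) (auto simp: literal_args_def nth_append)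

text \<open>Nodes n and n + 1 of this circuit hold the constants 0 and 1, node n + 2 + i is computed
  by the gate neg i (meant to negate input i), and node 2n + 2 + t by a monotone DNF gate on the
  literals for the function fl ! t.\<close>
definition literal_circuit :: "nat \<Rightarrow> (nat \<Rightarrow> gate) \<Rightarrow> (bool list \<Rightarrow> bool) list \<Rightarrow> gate list" where
  "literal_circuit n neg fl = [(\<lambda>_. False, []), (\<lambda>_. True, [])] @ map neg [0..<n]
     @ map (\<lambda>f. (literal_dnf n f, literal_args n)) fl"

lemma wf_literal_circuit:
  assumes "\<And>i. i < n \<Longrightarrow> \<forall>a\<in>set (snd (neg i)). a < n + 2"
  shows "wf_circuit n (literal_circuit n neg fl)"
proof -
  have "wf_circuit n [(\<lambda>_. False, []), (\<lambda>_. True, [])]"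
    by (auto simp: wf_circuit_def less_Suc_eq)
  then have "wf_circuit n ([(\<lambda>_. False, []), (\<lambda>_. True, [])] @ map neg [0..<n])"
    by (rule wf_circuit_append) (use assms in \<open>auto simp: image_iff\<close>, metis snd_conv)
  then show ?thesis
    unfolding literal_circuit_def append_assoc[symmetric]
    by (rule wf_circuit_append) (auto dest: set_literal_args)
qed

lemma gate_in_basis_literal_circuit:
  assumes "\<And>i. i < n \<Longrightarrow> gate_in_basis oms (neg i)" "gt \<in> set (literal_circuit n neg fl)"
  shows "gate_in_basis oms gt"
  using assms monotone_literal_dnf[of n] unfolding literal_circuit_def
  by (auto simp: gate_in_basis_def length_literal_args monotone_fn_def)

lemma circ_vals_literal_circuit:
  assumes len: "length x = n"
    and neg_args: "\<And>i. i < n \<Longrightarrow> \<forall>a\<in>set (snd (neg i)). a < n + 2"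
    and neg_val: "\<And>i. i < n \<Longrightarrow> fst (neg i) (map ((!) (x @ [False, True])) (snd (neg i))) = (\<not> x ! i)"
  shows "circ_vals (literal_circuit n neg fl) x = x @ [False, True] @ map Not x @ map (\<lambda>f. f x) fl"
proof -
  let ?v1 = "x @ [False, True]"
  let ?v2 = "?v1 @ map Not x"
  have "circ_vals (map neg [0..<n]) ?v1 = ?v1 @ map (\<lambda>(g, as). g (map ((!) ?v1) as)) (map neg [0..<n])"
    by (rule circ_vals_layer) (use neg_args len in \<open>auto simp: image_iff\<close>, metis snd_conv)
  also have "map (\<lambda>(g, as). g (map ((!) ?v1) as)) (map neg [0..<n]) = map Not x"
    using neg_val len by (auto simp: split_beta intro!: nth_equalityI)
  finally have layer2: "circ_vals (map neg [0..<n]) ?v1 = ?v2"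
    by simp
  have "circ_vals (map (\<lambda>f. (literal_dnf n f, literal_args n)) fl) ?v2
        = ?v2 @ map (\<lambda>(g, as). g (map ((!) ?v2) as)) (map (\<lambda>f. (literal_dnf n f, literal_args n)) fl)"
    by (rule circ_vals_layer) (auto simp: len dest: set_literal_args)
  also have "\<dots> = ?v2 @ map (\<lambda>f. f x) fl"
    using map_nth_literal_args[OF len] literal_dnf_literals[OF len] by simp
  finally show ?thesis
    unfolding literal_circuit_def using layer2 by (simp add: circ_vals_append)
qed

lemma realizes_exists:
  assumes "(k, w) \<in> set oms" "\<not> monotone_fn k w" "finite F"
  shows "\<exists>gs. realizes oms n gs F"
proof -
  obtain xs D where xs: "length xs = k"
    and negates: "\<And>b. w (map (\<lambda>j. if j \<in> D then b else xs ! j) [0..<k]) = (\<not> b)"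
    using nonmonotone_fn_negates[OF assms(2)] by blast
  obtain fl where fl: "set fl = F"
    using assms(3) finite_list by blast
  define neg where
    "neg i = (w, map (\<lambda>j. if j \<in> D then i else if xs ! j then Suc n else n) [0..<k])" for i
  define gs where "gs = literal_circuit n neg fl"
  have neg_args: "\<forall>a\<in>set (snd (neg i)). a < n + 2" if "i < n" for i
    using that unfolding neg_def by auto
  have neg_val: "fst (neg i) (map ((!) (x @ [False, True])) (snd (neg i))) = (\<not> x ! i)"
    if "length x = n" "i < n" for x i
  proof -
    have args: "map ((!) (x @ [False, True])) (snd (neg i))
                = map (\<lambda>j. if j \<in> D then x ! i else xs ! j) [0..<k]"
      using that by (auto simp: neg_def nth_append)
    have "fst (neg i) = w"
      by (simp add: neg_def)
    then show ?thesis
      unfolding args by (simp only: negates)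
  qed
  have neg_basis: "gate_in_basis oms (neg i)" for i
    using assms(1) xs by (auto simp: gate_in_basis_def neg_def)
  have "wf_circuit n gs"
    unfolding gs_def using neg_args by (rule wf_literal_circuit)
  moreover have "gate_in_basis oms gt" if "gt \<in> set gs" for gt
    using neg_basis that unfolding gs_def by (rule gate_in_basis_literal_circuit)
  moreover have "\<exists>q < n + length gs. \<forall>x. length x = n \<longrightarrow> circ_vals gs x ! q = f x"
    if "f \<in> F" for f
  proof -
    obtain t where t: "t < length fl" "f = fl ! t"
      using \<open>f \<in> F\<close> unfolding fl[symmetric] by (auto simp: in_set_conv_nth)
    have "circ_vals gs x ! (n + 2 + n + t) = f x" if "length x = n" for x
      using t that circ_vals_literal_circuit[OF that neg_args neg_val[OF that]]
      unfolding gs_def by (simp add: nth_append)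
    moreover have "n + 2 + n + t < n + length gs"
      using t by (simp add: gs_def literal_circuit_def)
    ultimately show ?thesis by blast
  qed
  ultimately show ?thesis
    unfolding realizes_def by blast
qed

lemma ceiling_log_le_of_le_pow2:
  fixes D W R :: nat
  assumes "D \<le> (2 ^ W - 1) * R" "R \<ge> 1"
  shows "real_of_int \<lceil>log 2 (real D + 1)\<rceil> - (log 2 (real R) + 1) \<le> real W"
proof -
  have "D \<le> 2 ^ W * R - R" "R \<le> 2 ^ W * R"
    using assms(1) by (simp_all add: diff_mult_distrib)
  then have "D + 1 \<le> 2 ^ W * R"
    using assms(2) by linarith
  then have "real (D + 1) \<le> real (2 ^ W * R)"
    by (rule of_nat_mono)
  then have "real D + 1 \<le> 2 ^ W * real R"
    by simp
  then have "log 2 (real D + 1) \<le> log 2 (2 ^ W * real R)"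
    by (intro log_mono) auto
  also have "\<dots> = real W + log 2 (real R)"
    using assms(2) by (simp add: log_mult_pos log_pow_cancel)
  finally show ?thesis
    using ceiling_correct[of "log 2 (real D + 1)"] by linarith
qed

theorem lemma2:
  fixes oms :: "(nat \<times> (bool list \<Rightarrow> bool)) list"
    and n :: nat and F :: "(bool list \<Rightarrow> bool) set"
  assumes "length oms \<ge> 1"
    and "\<forall>(k, w) \<in> set oms. \<not> monotone_fn k w"
    and "finite F"
  shows "real (I_B oms n F) \<ge> real_of_int \<lceil>log 2 (real (dF n F) + 1)\<rceil> - c_B oms"
proof -
  obtain kw where "kw \<in> set oms"
    using assms(1) by (cases oms) auto
  then obtain k w where "(k, w) \<in> set oms"
    by (metis surj_pair)
  then have "\<exists>gs. realizes oms n gs F"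
    using assms(2,3) realizes_exists by blast
  then have "\<exists>gs. realizes oms n gs F \<and> circ_weight gs = I_B oms n F"
    unfolding I_B_def
    using LeastI_ex[of "\<lambda>w. \<exists>gs. realizes oms n gs F \<and> circ_weight gs = w"] by blast
  then obtain gs where "realizes oms n gs F" "circ_weight gs = I_B oms n F"
    by blast
  then have "dF n F \<le> (2 ^ I_B oms n F - 1) * (2 * r_B oms + 1)"
    using dF_le_of_realizes by metis
  then have "real_of_int \<lceil>log 2 (real (dF n F) + 1)\<rceil> - (log 2 (real (2 * r_B oms + 1)) + 1)
             \<le> real (I_B oms n F)"
    by (rule ceiling_log_le_of_le_pow2) simp
  moreover have "c_B oms = log 2 (real (2 * r_B oms + 1)) + 1"
    by (simp add: c_B_def add.commute)
  ultimately show ?thesis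
    by simp
qed

end
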